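(* Let $r\ge 3$ and let $\mathbb{P}^m_r$ be an $r$-uniform hyperpath with $m$ edges. Then $\lambda(\mathbb{P}^m_r)=2r-2$ if $m=1$, $\lambda(\mathbb{P}^m_r)=2r-1$ if $m=2$, and $\lambda(\mathbb{P}^m_r)=2r$ if $m\ge 3$.
   Context: An $r$-uniform hypergraph (every edge has exactly $r$ vertices) with $m$ edges is a hyperpath $\mathbb{P}^m_r$ if its edges can be ordered $e_1,\dots,e_m$ and there are vertices $v_1,\dots,v_{m-1}$ such that for $1\le i<j\le m$, $e_i\cap e_j=\emptyset$ if $j\ne i+1$ and $e_i\cap e_{i+1}=\{v_i\}$; its vertex set is the union of its edges. An $L(2,1)$-colouring of a hypergraph $\mathbb{H}=(V,E)$ is a map $f:V\to\mathbb{Z}_{\ge 0}$ such that $|f(u)-f(v)|\ge 2$ whenever $u\ne v$ lie in a common edge, and $|f(u)-f(v)|\ge 1$ whenever there are edges $e_1\ni v$, $e_2\ni u$ with $(e_1\cap e_2)\setminus\{u,v\}\ne\emptyset$. Its span is $\max f-\min f$, and $\lambda(\mathbb{H})$ is the minimum span. *)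

theory Defs
  imports Main
begin

definition uniform :: "nat \<Rightarrow> 'a set set \<Rightarrow> bool" where
  "uniform r E \<longleftrightarrow> (\<forall>e\<in>E. finite e \<and> card e = r)"

definition hyperpath :: "nat \<Rightarrow> nat \<Rightarrow> 'a set \<Rightarrow> 'a set set \<Rightarrow> bool" where
  "hyperpath r m V E \<longleftrightarrow> uniform r E \<and> V = \<Union>E \<and>
     (\<exists>es vs. length es = m \<and> distinct es \<and> set es = E \<and> length vs = m - 1 \<and>
        (\<forall>i j. i < j \<and> j < m \<longrightarrow>
           (if j = i + 1 then es ! i \<inter> es ! j = {vs ! i} else es ! i \<inter> es ! j = {})))"

definition L21_colouring :: "'a set \<Rightarrow> 'a set set \<Rightarrow> ('a \<Rightarrow> nat) \<Rightarrow> bool" where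
  "L21_colouring V E f \<longleftrightarrow>
     (\<forall>u\<in>V. \<forall>v\<in>V. u \<noteq> v \<and> (\<exists>e\<in>E. u \<in> e \<and> v \<in> e) \<longrightarrow>
         \<bar>int (f u) - int (f v)\<bar> \<ge> 2) \<and>
     (\<forall>u\<in>V. \<forall>v\<in>V. u \<noteq> v \<and> (\<exists>e1\<in>E. \<exists>e2\<in>E. v \<in> e1 \<and> u \<in> e2 \<and> (e1 \<inter> e2) - {u, v} \<noteq> {}) \<longrightarrow>
         \<bar>int (f u) - int (f v)\<bar> \<ge> 1)"

definition span :: "'a set \<Rightarrow> ('a \<Rightarrow> nat) \<Rightarrow> nat" where
  "span V f = Max (f ` V) - Min (f ` V)"

definition lambda21 :: "'a set \<Rightarrow> 'a set set \<Rightarrow> nat" where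
  "lambda21 V E = (LEAST k. \<exists>f. L21_colouring V E f \<and> span V f = k)"

end

theory Submission
  imports Defs
begin

text \<open>
  Colours within an edge are pairwise at least two apart, and the colours on two consecutive
  edges are pairwise distinct, because their junction vertex is a common neighbour. Hence one
  edge needs span at least 2r - 2. If three consecutive
  edges had span 2r - 1, counting would put both junction colours at the two ends of the colour
  interval, and then the middle edge would have to alternate with the first one across an
  interval of odd length, which is impossible.

  Optimal colourings arise from palettes: sets of r colours, pairwise two apart, one per edge,
  such that consecutive palettes share exactly one colour, which the junction receives. For
  three or more edges four palettes inside {0..2r} are used cyclically.
\<close>

definition two_apart :: "nat set \<Rightarrow> bool" where
  "two_apart S \<longleftrightarrow> (\<forall>x\<in>S. \<forall>y\<in>S. x < y \<longrightarrow> x + 2 \<le> y)"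

lemma two_apart_Suc_notin: "two_apart S \<Longrightarrow> x \<in> S \<Longrightarrow> x + 1 \<notin> S"
  unfolding two_apart_def by fastforce

lemma two_apart_subset: "two_apart S \<Longrightarrow> T \<subseteq> S \<Longrightarrow> two_apart T"
  unfolding two_apart_def by blast

lemma two_apart_card:
  assumes "finite S" "two_apart S" "S \<subseteq> {a..b}"
  shows "2 * card S \<le> b - a + 2"
proof -
  have "inj_on (\<lambda>x. (x - a) div 2) S"
  proof (rule inj_onI)
    fix x y assume "x \<in> S" "y \<in> S" "(x - a) div 2 = (y - a) div 2"
    moreover have "a \<le> x" "a \<le> y" using calculation assms(3) by auto
    ultimately have "x < y + 2 \<and> y < x + 2" by linarith
    with \<open>x \<in> S\<close> \<open>y \<in> S\<close> assms(2) show "x = y"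
      unfolding two_apart_def by (metis linorder_neqE_nat not_le)
  qed
  moreover have "(\<lambda>x. (x - a) div 2) ` S \<subseteq> {..(b - a) div 2}"
    using assms(3) by (force intro: div_le_mono)
  ultimately have "card S \<le> card {..(b - a) div 2}"
    by (metis card_inj_on_le finite_atMost)
  then show ?thesis by simp
qed

lemma card_disjoint_subsets_interval:
  fixes S T :: "nat set"
  assumes "S \<subseteq> {a..b}" "T \<subseteq> {a..b}" "S \<inter> T = {}"
  shows "card S + card T \<le> Suc b - a"
proof -
  have "card S + card T = card (S \<union> T)"
    using assms by (intro card_Un_disjoint[symmetric]) (auto intro: finite_subset)
  also have "\<dots> \<le> card {a..b}" using assms by (intro card_mono) auto
  finally show ?thesis by simp
qed

lemma interval_minus_point_eqI:
  fixes S :: "nat set"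
  assumes "S \<subseteq> {a..b} - {p}" "p \<in> {a..b}" "card S = b - a"
  shows "S = {a..b} - {p}"
  using assms by (intro card_subset_eq) (auto simp: card_Diff_singleton)

lemma alternating_parity:
  fixes B :: "nat set"
  assumes "\<And>t. a \<le> t \<Longrightarrow> t < b \<Longrightarrow> t \<in> B \<longleftrightarrow> t + 1 \<notin> B" "a \<in> B" "a + k \<le> b"
  shows "a + k \<in> B \<longleftrightarrow> even k"
  using assms(3)
proof (induction k)
  case (Suc k)
  then show ?case using assms(1)[of "a + k"] by auto
qed (use assms(2) in simp)

lemma two_apart_cover_alternates:
  assumes "two_apart A" "two_apart B" "t \<in> A \<union> B" "t + 1 \<in> A \<union> B"
  shows "t \<in> B \<longleftrightarrow> t + 1 \<notin> B"
  using assms two_apart_Suc_notin by blast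

lemma span_le:
  assumes "finite V" "V \<noteq> {}" "f ` V \<subseteq> {..B}"
  shows "span V f \<le> B"
proof -
  have "Max (f ` V) \<le> B" using assms by (subst Max_le_iff) auto
  then show ?thesis by (simp add: span_def)
qed

lemma span_mono:
  assumes "finite V" "U \<subseteq> V" "U \<noteq> {}"
  shows "span U f \<le> span V f"
proof -
  have "Max (f ` U) \<le> Max (f ` V)" "Min (f ` V) \<le> Min (f ` U)"
    using assms by (auto intro: Max_mono Min_antimono)
  then show ?thesis by (simp add: span_def)
qed

lemma lambda21_eqI:
  assumes "\<And>f. L21_colouring V E f \<Longrightarrow> B \<le> span V f"
    and "L21_colouring V E g" "span V g \<le> B"
  shows "lambda21 V E = B"
  unfolding lambda21_def
proof (rule Least_equality)
  show "\<exists>f. L21_colouring V E f \<and> span V f = B"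
    using assms by (intro exI[of _ g]) (simp add: le_antisym)
qed (use assms(1) in blast)

lemma image_subset_Min_span:
  assumes "finite V"
  shows "f ` V \<subseteq> {Min (f ` V)..Min (f ` V) + span V f}"
proof
  fix y assume "y \<in> f ` V"
  then have "Min (f ` V) \<le> y" "y \<le> Max (f ` V)" using assms by auto
  then show "y \<in> {Min (f ` V)..Min (f ` V) + span V f}" by (simp add: span_def)
qed

lemma junction_colour_not_adjacent:
  assumes "v \<in> A" "v \<in> B" "two_apart (f ` A)" "two_apart (f ` B)" "x \<in> A \<union> B"
  shows "f x \<noteq> f v + 1" "f x + 1 \<noteq> f v"
  using assms two_apart_Suc_notin by (metis UnE image_eqI)+

lemma Min_less_Max_if_card_ge_2:
  fixes S :: "'a :: linorder set"
  assumes "finite S" "2 \<le> card S"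
  shows "Min S < Max S"
proof -
  obtain x y where "x \<in> S" "y \<in> S" "x < y"
    using assms by (metis One_nat_def card_le_Suc0_iff_eq linorder_neqE not_less_eq_eq numeral_2_eq_2)
  with assms(1) show ?thesis by (meson Max_ge Min_le le_less_trans less_le_trans)
qed

lemma card_le_span_of_junction:
  assumes "finite A" "finite B" "v \<in> A" "v \<in> B" "two_apart (f ` A)" "two_apart (f ` B)"
    and "inj_on f (A \<union> B)" "2 \<le> card (A \<union> B)"
  shows "card (A \<union> B) \<le> span (A \<union> B) f"
proof -
  define S where "S = f ` (A \<union> B)"
  have S: "finite S" "S \<subseteq> {Min S..Max S}" "card S = card (A \<union> B)" "f v \<in> S"
    using assms by (auto simp: S_def card_image)
  have "Min S < Max S" using S assms(8) by (intro Min_less_Max_if_card_ge_2) auto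
  moreover have "Min S \<le> f v" "f v \<le> Max S" using S by auto
  ultimately obtain t where t: "t \<in> {Min S..Max S}" "t = f v + 1 \<or> t + 1 = f v"
  proof (cases "f v < Max S")
    case True
    then show ?thesis using that[of "f v + 1"] \<open>Min S \<le> f v\<close> by simp
  next
    case False
    then show ?thesis using that[of "f v - 1"] \<open>Min S < Max S\<close> \<open>f v \<le> Max S\<close> by simp
  qed
  have "t \<notin> S" using t(2) junction_colour_not_adjacent[OF assms(3-6)] by (auto simp: S_def)
  then have "card S + card {t} \<le> Suc (Max S) - Min S"
    using S t by (intro card_disjoint_subsets_interval) auto
  then show ?thesis using S by (simp add: span_def S_def)
qed

lemma junction_colour_at_end:
  assumes "v \<in> A" "v \<in> B" "two_apart (f ` A)" "two_apart (f ` B)"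
    and "inj_on f (A \<union> B)" "f ` (A \<union> B) \<subseteq> {a..b}" "b - a \<le> card (A \<union> B)"
  shows "f v = a \<or> f v = b"
proof (rule ccontr)
  assume "\<not> (f v = a \<or> f v = b)"
  moreover have "a \<le> f v" "f v \<le> b" using assms(1,6) by auto
  ultimately have inner: "a < f v" "f v < b" by auto
  have "f ` (A \<union> B) \<inter> {f v - 1, f v + 1} = {}"
    using junction_colour_not_adjacent[OF assms(1-4)] inner by fastforce
  then have "card (f ` (A \<union> B)) + card {f v - 1, f v + 1} \<le> Suc b - a"
    using assms(6) inner by (intro card_disjoint_subsets_interval) auto
  then show False using assms(5,7) inner by (simp add: card_image)
qed

lemma card_Un_single_meet:
  assumes "finite A" "finite B" "card A = r" "card B = r" "A \<inter> B = {v}"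
  shows "card (A \<union> B) = 2 * r - 1"
  using card_Un_Int[OF assms(1,2)] assms by simp

text \<open>By counting, e0 \<union> e1 uses every colour of {a..b} except a + 1 and e1 \<union> e2 every
  colour except b - 1. Hence e1 and e0 alternate on {a + 2..b}, and since this interval has
  an even number of elements, b is not a colour of e1.\<close>

lemma three_edges_junctions_not_at_opposite_ends:
  assumes "r \<ge> 3"
    and fin: "finite e0" "finite e1" "finite e2" "card e0 = r" "card e1 = r" "card e2 = r"
    and meet: "e0 \<inter> e1 = {v0}" "e1 \<inter> e2 = {v1}"
    and apart: "two_apart (f ` e0)" "two_apart (f ` e1)" "two_apart (f ` e2)"
    and inj: "inj_on f (e0 \<union> e1)" "inj_on f (e1 \<union> e2)"
    and range: "f ` (e0 \<union> e1 \<union> e2) \<subseteq> {a..b}" and b: "b = a + (2 * r - 1)"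
    and ends: "f v0 = a" "f v1 = b"
  shows False
proof -
  have v: "v0 \<in> e0" "v0 \<in> e1" "v1 \<in> e1" "v1 \<in> e2" using meet by auto
  have "f ` (e0 \<union> e1) \<subseteq> {a..b} - {a + 1}"
  proof
    fix y assume "y \<in> f ` (e0 \<union> e1)"
    then obtain x where x: "x \<in> e0 \<union> e1" "y = f x" by blast
    then have "y \<in> {a..b}" using range by blast
    moreover have "y \<noteq> a + 1" using junction_colour_not_adjacent(1)[OF v(1,2) apart(1,2) x(1)] x(2) ends by simp
    ultimately show "y \<in> {a..b} - {a + 1}" by simp
  qed
  then have left: "f ` (e0 \<union> e1) = {a..b} - {a + 1}"
    using assms(1) b card_Un_single_meet[OF fin(1,2,4,5) meet(1)] inj
    by (intro interval_minus_point_eqI) (auto simp: card_image)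
  have "f ` (e1 \<union> e2) \<subseteq> {a..b} - {b - 1}"
  proof
    fix y assume "y \<in> f ` (e1 \<union> e2)"
    then obtain x where x: "x \<in> e1 \<union> e2" "y = f x" by blast
    then have "y \<in> {a..b}" using range by blast
    moreover have "y + 1 \<noteq> b" using junction_colour_not_adjacent(2)[OF v(3,4) apart(2,3) x(1)] x(2) ends by simp
    ultimately show "y \<in> {a..b} - {b - 1}" using assms(1) b by auto
  qed
  then have right: "f ` (e1 \<union> e2) = {a..b} - {b - 1}"
    using assms(1) b card_Un_single_meet[OF fin(2,3,5,6) meet(2)] inj
    by (intro interval_minus_point_eqI) (auto simp: card_image)
  have "a + 1 \<notin> f ` e1" using two_apart_Suc_notin[OF apart(2)] v(2) ends by blast
  then have "a + 1 \<in> f ` e2" using right assms(1) b by auto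
  then have "a + 2 \<notin> f ` e2" using two_apart_Suc_notin[OF apart(3)] by fastforce
  then have start: "a + 2 \<in> f ` e1" using right assms(1) b by auto
  have alternate: "t \<in> f ` e1 \<longleftrightarrow> t + 1 \<notin> f ` e1" if "a + 2 \<le> t" "t < b" for t
    using left that by (intro two_apart_cover_alternates[OF apart(1,2)]) auto
  have "a + 2 + (2 * r - 3) \<le> b" using assms(1) b by simp
  with alternate start have "a + 2 + (2 * r - 3) \<in> f ` e1 \<longleftrightarrow> even (2 * r - 3)"
    by (rule alternating_parity)
  moreover have "a + 2 + (2 * r - 3) = f v1" "odd (2 * r - 3)" using assms(1) b ends by auto
  ultimately show False using v(3) by simp
qed

lemma three_edges_span_ge:
  assumes "r \<ge> 3"
    and fin: "finite e0" "finite e1" "finite e2" "card e0 = r" "card e1 = r" "card e2 = r"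
    and meet: "e0 \<inter> e1 = {v0}" "e1 \<inter> e2 = {v1}" "e0 \<inter> e2 = {}"
    and apart: "two_apart (f ` e0)" "two_apart (f ` e1)" "two_apart (f ` e2)"
    and inj: "inj_on f (e0 \<union> e1)" "inj_on f (e1 \<union> e2)"
  shows "2 * r \<le> span (e0 \<union> e1 \<union> e2) f"
proof (rule ccontr)
  define U where "U = e0 \<union> e1 \<union> e2"
  define a where "a = Min (f ` U)"
  define b where "b = a + (2 * r - 1)"
  assume "\<not> 2 * r \<le> span (e0 \<union> e1 \<union> e2) f"
  then have range: "f ` U \<subseteq> {a..b}"
    using image_subset_Min_span[of U f] fin(1-3) by (force simp: U_def a_def b_def)
  have v: "v0 \<in> e0" "v0 \<in> e1" "v1 \<in> e1" "v1 \<in> e2" using meet by auto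
  have "f v0 = a \<or> f v0 = b"
    using range b_def card_Un_single_meet[OF fin(1,2,4,5) meet(1)]
    by (intro junction_colour_at_end[OF v(1,2) apart(1,2) inj(1)]) (auto simp: U_def)
  moreover have "f v1 = a \<or> f v1 = b"
    using range b_def card_Un_single_meet[OF fin(2,3,5,6) meet(2)]
    by (intro junction_colour_at_end[OF v(3,4) apart(2,3) inj(2)]) (auto simp: U_def)
  moreover have "f v0 \<noteq> f v1"
    using inj(1) v meet(3) by (metis Un_iff disjoint_iff inj_onD)
  ultimately consider "f v0 = a" "f v1 = b" | "f v1 = a" "f v0 = b" by auto
  then show False
  proof cases
    case 1
    show False
      by (rule three_edges_junctions_not_at_opposite_ends[OF assms(1) fin meet(1,2) apart inj
            range[unfolded U_def] b_def 1])
  next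
    case 2
    have "f ` (e2 \<union> e1 \<union> e0) \<subseteq> {a..b}" using range by (auto simp: U_def)
    moreover have "e2 \<inter> e1 = {v1}" "e1 \<inter> e0 = {v0}" using meet by auto
    moreover have "inj_on f (e2 \<union> e1)" "inj_on f (e1 \<union> e0)" using inj by (simp_all add: ac_simps)
    ultimately show False
      using three_edges_junctions_not_at_opposite_ends[OF assms(1) fin(3,2,1) fin(6,5,4) _ _ apart(3,2,1)]
        b_def 2 by blast
  qed
qed

lemma L21_colouringI:
  assumes "\<And>u v e. u \<in> V \<Longrightarrow> v \<in> V \<Longrightarrow> u \<noteq> v \<Longrightarrow> e \<in> E \<Longrightarrow> u \<in> e \<Longrightarrow> v \<in> e \<Longrightarrow>
      f u + 2 \<le> f v \<or> f v + 2 \<le> f u"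
    and "\<And>u v e1 e2 w. u \<in> V \<Longrightarrow> v \<in> V \<Longrightarrow> u \<noteq> v \<Longrightarrow> e1 \<in> E \<Longrightarrow> e2 \<in> E \<Longrightarrow>
      v \<in> e1 \<Longrightarrow> u \<in> e2 \<Longrightarrow> w \<in> e1 \<Longrightarrow> w \<in> e2 \<Longrightarrow> w \<noteq> u \<Longrightarrow> w \<noteq> v \<Longrightarrow> f u \<noteq> f v"
  shows "L21_colouring V E f"
  unfolding L21_colouring_def
proof (intro conjI ballI impI)
  fix u v assume "u \<in> V" "v \<in> V" "u \<noteq> v \<and> (\<exists>e\<in>E. u \<in> e \<and> v \<in> e)"
  then show "2 \<le> \<bar>int (f u) - int (f v)\<bar>" using assms(1) by fastforce
next
  fix u v assume "u \<in> V" "v \<in> V"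
    "u \<noteq> v \<and> (\<exists>e1\<in>E. \<exists>e2\<in>E. v \<in> e1 \<and> u \<in> e2 \<and> e1 \<inter> e2 - {u, v} \<noteq> {})"
  then have "f u \<noteq> f v" using assms(2) by blast
  then show "1 \<le> \<bar>int (f u) - int (f v)\<bar>" by simp
qed

lemma L21_colouring_same_edgeD:
  assumes "L21_colouring V E f" "e \<in> E" "e \<subseteq> V" "u \<in> e" "v \<in> e" "u \<noteq> v"
  shows "f u + 2 \<le> f v \<or> f v + 2 \<le> f u"
proof -
  have "2 \<le> \<bar>int (f u) - int (f v)\<bar>"
    using assms unfolding L21_colouring_def by blast
  then show ?thesis by linarith
qed

lemma L21_colouring_common_neighbourD:
  assumes "L21_colouring V E f" "e1 \<in> E" "e2 \<in> E" "e1 \<union> e2 \<subseteq> V"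
    "v \<in> e1" "u \<in> e2" "w \<in> e1" "w \<in> e2" "w \<noteq> u" "w \<noteq> v" "u \<noteq> v"
  shows "f u \<noteq> f v"
proof -
  have "e1 \<inter> e2 - {u, v} \<noteq> {}" using assms(7-10) by blast
  then have "1 \<le> \<bar>int (f u) - int (f v)\<bar>"
    using assms(1-6,11) unfolding L21_colouring_def by blast
  then show ?thesis by auto
qed

lemma L21_colouring_on_edge:
  assumes "L21_colouring V E f" "e \<in> E" "e \<subseteq> V"
  shows "inj_on f e" "two_apart (f ` e)"
  using L21_colouring_same_edgeD[OF assms]
  by (force intro: inj_onI, force simp: two_apart_def)

lemma L21_colouring_inj_on_meeting_edges:
  assumes "L21_colouring V E f" "A \<in> E" "B \<in> E" "A \<union> B \<subseteq> V" "w \<in> A" "w \<in> B"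
  shows "inj_on f (A \<union> B)"
proof (rule inj_onI)
  fix x y assume xy: "x \<in> A \<union> B" "y \<in> A \<union> B" "f x = f y"
  show "x = y"
  proof (rule ccontr)
    assume "x \<noteq> y"
    have same: False if "x \<in> C" "y \<in> C" "C \<in> {A, B}" for C
      using L21_colouring_same_edgeD[OF assms(1), of C x y] that xy(3) \<open>x \<noteq> y\<close> assms(2-4) by auto
    then have cross: "x \<in> A \<and> y \<in> B \<or> x \<in> B \<and> y \<in> A" and "w \<noteq> x" "w \<noteq> y"
      using xy(1,2) assms(5,6) by blast+
    from cross show False
      using L21_colouring_common_neighbourD[OF assms(1), of A B y x w]
        L21_colouring_common_neighbourD[OF assms(1), of B A y x w]
        assms(2-6) \<open>w \<noteq> x\<close> \<open>w \<noteq> y\<close> \<open>x \<noteq> y\<close> xy(3) by (auto simp: Un_commute)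
  qed
qed

lemma inj_on_extend:
  assumes "finite A" "finite B" "card A \<le> card B" "P \<subseteq> A" "inj_on p P" "p ` P \<subseteq> B"
  shows "\<exists>g. inj_on g A \<and> g ` A \<subseteq> B \<and> (\<forall>x\<in>P. g x = p x)"
proof -
  have "finite P" using assms(1,4) finite_subset by blast
  then have "card (A - P) \<le> card (B - p ` P)"
    using assms by (simp add: card_Diff_subset card_image)
  then obtain h where h: "h ` (A - P) \<subseteq> B - p ` P" "inj_on h (A - P)"
    using card_le_inj[of "A - P" "B - p ` P"] assms(1,2) by auto
  define g where "g x = (if x \<in> P then p x else h x)" for x
  have "inj_on g (P \<union> (A - P))"
    unfolding inj_on_Un using assms(5) h by (auto simp: g_def inj_on_def)
  moreover have "P \<union> (A - P) = A" using assms(4) by blast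
  moreover have "g ` A \<subseteq> B" using assms(6) h(1) by (auto simp: g_def)
  ultimately show ?thesis by (intro exI[of _ g]) (simp add: g_def)
qed

lemma inj_on_extend_indexed:
  assumes "finite A" "finite B" "card A \<le> card B"
    and "inj_on a P" "a ` P \<subseteq> A" "inj_on t P" "t ` P \<subseteq> B"
  shows "\<exists>g. inj_on g A \<and> g ` A \<subseteq> B \<and> (\<forall>j\<in>P. g (a j) = t j)"
proof -
  have inj: "inj_on (t \<circ> the_inv_into P a) (a ` P)"
    using assms(4,6) by (simp add: comp_inj_on inj_on_the_inv_into the_inv_into_onto)
  have "(t \<circ> the_inv_into P a) ` a ` P \<subseteq> B"
    using assms(4,7) by (auto simp: the_inv_into_f_f)
  then obtain g where "inj_on g A" "g ` A \<subseteq> B" "\<forall>x\<in>a ` P. g x = (t \<circ> the_inv_into P a) x"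
    using inj_on_extend[OF assms(1-3,5) inj] by blast
  then show ?thesis using assms(4) by (auto simp: the_inv_into_f_f)
qed

lemma glue_compatible_maps:
  assumes "\<And>i j x. i \<in> I \<Longrightarrow> j \<in> I \<Longrightarrow> x \<in> A i \<Longrightarrow> x \<in> A j \<Longrightarrow> g i x = g j x"
  shows "\<exists>f. \<forall>i\<in>I. \<forall>x\<in>A i. f x = g i x"
proof -
  define f where "f x = g (SOME i. i \<in> I \<and> x \<in> A i) x" for x
  have "f x = g i x" if "i \<in> I" "x \<in> A i" for i x
  proof -
    have "(SOME i. i \<in> I \<and> x \<in> A i) \<in> I \<and> x \<in> A (SOME i. i \<in> I \<and> x \<in> A i)"
      using that by (rule someI[of _ i, OF conjI])
    then show ?thesis using assms that unfolding f_def by blast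
  qed
  then show ?thesis by blast
qed

lemma inj_on_Un_single_meet:
  assumes "inj_on f A" "inj_on f B" "A \<inter> B = {v}" "f ` A \<inter> f ` B \<subseteq> {f v}"
  shows "inj_on f (A \<union> B)"
  unfolding inj_on_Un
proof (intro conjI assms(1,2))
  have "v \<in> A" "v \<in> B" using assms(3) by auto
  then show "f ` (A - B) \<inter> f ` (B - A) = {}"
    using assms by (auto dest: inj_onD)
qed

lemma card_arith_progression: "card ((\<lambda>k. 2 * k + c) ` {..<n}) = (n :: nat)"
  by (subst card_image) (auto simp: inj_on_def)

definition cyclic_palette :: "nat \<Rightarrow> nat \<Rightarrow> nat set" where
  "cyclic_palette r i =
     (if i mod 4 = 0 then {0, 3} \<union> (\<lambda>k. 2 * k + 6) ` {..<r - 2}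
      else if i mod 4 = 1 then {1, 3} \<union> (\<lambda>k. 2 * k + 5) ` {..<r - 2}
      else if i mod 4 = 2 then {1, 4} \<union> (\<lambda>k. 2 * k + 6) ` {..<r - 2}
      else {0, 2, 4} \<union> (\<lambda>k. 2 * k + 7) ` {..<r - 3})"

definition cyclic_junction :: "nat \<Rightarrow> nat" where
  "cyclic_junction i =
     (if i mod 4 = 0 then 3 else if i mod 4 = 1 then 1 else if i mod 4 = 2 then 4 else 0)"

lemma mod_4_cases:
  obtains "i mod 4 = 0" "Suc i mod 4 = 1" | "i mod 4 = 1" "Suc i mod 4 = 2"
    | "i mod 4 = 2" "Suc i mod 4 = 3" | "i mod 4 = 3" "Suc i mod 4 = 0"
proof -
  have "i mod 4 < 4" by simp
  then consider "i mod 4 = 0" | "i mod 4 = 1" | "i mod 4 = 2" | "i mod 4 = 3" by linarith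
  then show thesis using that mod_Suc[of i 4] by cases simp_all
qed

lemma finite_cyclic_palette: "finite (cyclic_palette r i)"
  by (simp add: cyclic_palette_def)

lemma card_cyclic_palette:
  assumes "r \<ge> 3"
  shows "card (cyclic_palette r i) = r"
proof -
  have "card ({a, b} \<union> (\<lambda>k. 2 * k + c) ` {..<r - 2}) = r" if "a < b" "b < c" for a b c :: nat
    using that assms by (subst card_Un_disjoint) (auto simp: card_arith_progression)
  moreover have "card ({0, 2, 4} \<union> (\<lambda>k. 2 * k + 7) ` {..<r - 3}) = r"
    using assms by (subst card_Un_disjoint) (auto simp: card_arith_progression)
  ultimately show ?thesis by (simp add: cyclic_palette_def)
qed

lemma two_apart_cyclic_palette: "two_apart (cyclic_palette r i)"
  unfolding cyclic_palette_def two_apart_def by auto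

lemma cyclic_palette_le: "r \<ge> 3 \<Longrightarrow> cyclic_palette r i \<subseteq> {..2 * r}"
  unfolding cyclic_palette_def by auto

lemma cyclic_palette_Int_Suc:
  "cyclic_palette r i \<inter> cyclic_palette r (Suc i) = {cyclic_junction i}"
proof -
  have parity: "2 * a \<noteq> Suc (2 * b)" "Suc (2 * b) \<noteq> 2 * a" for a b :: nat by presburger+
  show ?thesis
    by (cases i rule: mod_4_cases)
      (unfold cyclic_palette_def cyclic_junction_def, auto simp: parity)
qed

lemma cyclic_junction_Suc: "cyclic_junction i \<noteq> cyclic_junction (Suc i)"
  by (cases i rule: mod_4_cases) (simp_all add: cyclic_junction_def)

text \<open>Indices start at 0: \<open>es ! i\<close> and \<open>vs ! i\<close> are the edge e_(i+1) and the junction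
  vertex v_(i+1) of a hyperpath.\<close>

locale hyperpath_list =
  fixes r m :: nat and es :: "'a set list" and vs :: "'a list"
  assumes length_es: "length es = m"
    and finite_edge: "i < m \<Longrightarrow> finite (es ! i)"
    and card_edge: "i < m \<Longrightarrow> card (es ! i) = r"
    and consecutive_edges_meet: "i + 1 < m \<Longrightarrow> es ! i \<inter> es ! (i + 1) = {vs ! i}"
    and distant_edges_disjoint: "i + 1 < j \<Longrightarrow> j < m \<Longrightarrow> es ! i \<inter> es ! j = {}"
begin

abbreviation edges :: "'a set set" where "edges \<equiv> set es"

abbreviation verts :: "'a set" where "verts \<equiv> \<Union> (set es)"

lemma edge_in_edges: "i < m \<Longrightarrow> es ! i \<in> edges"
  using length_es by simp

lemma edge_subset_verts: "i < m \<Longrightarrow> es ! i \<subseteq> verts"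
  using edge_in_edges by blast

lemma edges_conv_nth: "e \<in> edges \<longleftrightarrow> (\<exists>i<m. e = es ! i)"
  using length_es by (auto simp: in_set_conv_nth)

lemma finite_verts: "finite verts"
proof (rule finite_Union)
  show "finite edges" by simp
  show "finite e" if "e \<in> edges" for e using that finite_edge by (auto simp: edges_conv_nth)
qed

lemma edge_nonempty: "i < m \<Longrightarrow> 0 < r \<Longrightarrow> es ! i \<noteq> {}"
  using card_edge by force

lemma verts_nonempty: "0 < m \<Longrightarrow> 0 < r \<Longrightarrow> verts \<noteq> {}"
  using edge_nonempty[of 0] edge_subset_verts[of 0] by blast

lemma junction_mem: "i + 1 < m \<Longrightarrow> vs ! i \<in> es ! i \<and> vs ! i \<in> es ! (i + 1)"
  using consecutive_edges_meet by blast

lemma edges_meet_consecutive: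
  assumes "i < j" "j < m" "x \<in> es ! i" "x \<in> es ! j"
  shows "j = i + 1" "x = vs ! i"
proof -
  show "j = i + 1"
    using distant_edges_disjoint[of i j] assms by (cases "i + 1 < j") auto
  then show "x = vs ! i"
    using consecutive_edges_meet[of i] assms by auto
qed

lemma L21_colouring_iff:
  "L21_colouring verts edges f \<longleftrightarrow>
     (\<forall>i<m. inj_on f (es ! i) \<and> two_apart (f ` es ! i)) \<and>
     (\<forall>i. i + 1 < m \<longrightarrow> inj_on f (es ! i \<union> es ! (i + 1)))"
proof
  assume colouring: "L21_colouring verts edges f"
  show "(\<forall>i<m. inj_on f (es ! i) \<and> two_apart (f ` es ! i)) \<and>
     (\<forall>i. i + 1 < m \<longrightarrow> inj_on f (es ! i \<union> es ! (i + 1)))"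
    using L21_colouring_on_edge[OF colouring edge_in_edges edge_subset_verts]
      L21_colouring_inj_on_meeting_edges[OF colouring edge_in_edges edge_in_edges _ junction_mem[THEN conjunct1]
        junction_mem[THEN conjunct2]]
      edge_subset_verts by simp
next
  assume conds: "(\<forall>i<m. inj_on f (es ! i) \<and> two_apart (f ` es ! i)) \<and>
     (\<forall>i. i + 1 < m \<longrightarrow> inj_on f (es ! i \<union> es ! (i + 1)))"
  have apart: "f u + 2 \<le> f v \<or> f v + 2 \<le> f u" if "i < m" "u \<in> es ! i" "v \<in> es ! i" "u \<noteq> v" for i u v
  proof -
    have "f u \<noteq> f v" using conds that by (meson inj_onD)
    then show ?thesis using conds that unfolding two_apart_def
      by (metis image_eqI linorder_neqE_nat)
  qed
  have cross: "f u \<noteq> f v" if "i < m" "j < m" "i < j" "u \<in> es ! i" "v \<in> es ! j" "w \<in> es ! i" "w \<in> es ! j"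
    "u \<noteq> v" for i j u v w
  proof -
    have "j = i + 1" using edges_meet_consecutive that by blast
    then show ?thesis using conds that by (metis UnCI inj_onD)
  qed
  show "L21_colouring verts edges f"
  proof (rule L21_colouringI)
    show "f u + 2 \<le> f v \<or> f v + 2 \<le> f u" if "u \<noteq> v" "e \<in> edges" "u \<in> e" "v \<in> e" for u v e
      using that apart by (auto simp: edges_conv_nth)
    show "f u \<noteq> f v" if "u \<noteq> v" and e: "e1 \<in> edges" "e2 \<in> edges"
      and "v \<in> e1" "u \<in> e2" "w \<in> e1" "w \<in> e2" for u v e1 e2 w
    proof -
      obtain i j where "i < m" "j < m" "e1 = es ! i" "e2 = es ! j"
        using e by (meson edges_conv_nth)
      then show ?thesis using that apart[of i u v] cross[of i j v u w] cross[of j i u v w]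
        by (cases i j rule: linorder_cases) force+
    qed
  qed
qed

lemma junction_index:
  assumes "j + 1 < m" "i < m" "vs ! j \<in> es ! i"
  shows "i = j \<or> i = j + 1"
  using junction_mem[OF assms(1)] assms distant_edges_disjoint[of i "j + 1"] distant_edges_disjoint[of j i]
  by (cases "i < j" ; cases "j + 1 < i") auto

lemma junction_inj: "i + 1 < m \<Longrightarrow> j + 1 < m \<Longrightarrow> vs ! i = vs ! j \<Longrightarrow> i = j"
  using junction_index[of i j] junction_index[of i "j + 1"] junction_mem[of j] by force

lemma edge_colouring_with_junctions:
  assumes "i < m" "finite (K i)" "r \<le> card (K i)"
    and KK: "\<And>j. j + 1 < m \<Longrightarrow> K j \<inter> K (j + 1) = {T j}"
    and TT: "\<And>j. j + 2 < m \<Longrightarrow> T j \<noteq> T (j + 1)"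
  shows "\<exists>g. inj_on g (es ! i) \<and> g ` es ! i \<subseteq> K i \<and>
           (\<forall>j. j + 1 < m \<and> vs ! j \<in> es ! i \<longrightarrow> g (vs ! j) = T j)"
proof -
  define P where "P = {j. j + 1 < m \<and> vs ! j \<in> es ! i}"
  have P: "i = j \<or> i = j + 1" if "j \<in> P" for j
    using that junction_index assms(1) by (auto simp: P_def)
  have "inj_on T P"
  proof (rule inj_onI)
    fix j k assume "j \<in> P" "k \<in> P" "T j = T k"
    then show "j = k" using P[of j] P[of k] TT[of j] TT[of k] by (auto simp: P_def)
  qed
  moreover have "T ` P \<subseteq> K i" using P KK by (auto simp: P_def)
  moreover have "inj_on (\<lambda>j. vs ! j) P" using junction_inj by (auto simp: P_def inj_on_def)
  moreover have "(\<lambda>j. vs ! j) ` P \<subseteq> es ! i" by (auto simp: P_def)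
  ultimately show ?thesis
    using inj_on_extend_indexed[of "es ! i" "K i" "\<lambda>j. vs ! j" P T] assms(1-3) finite_edge card_edge
    by (auto simp: P_def)
qed

lemma palette_colouring:
  assumes "\<And>i. i < m \<Longrightarrow> finite (K i)" "\<And>i. i < m \<Longrightarrow> r \<le> card (K i)"
    and "\<And>i. i + 1 < m \<Longrightarrow> K i \<inter> K (i + 1) = {T i}"
    and "\<And>i. i + 2 < m \<Longrightarrow> T i \<noteq> T (i + 1)"
  shows "\<exists>f. (\<forall>i<m. inj_on f (es ! i) \<and> f ` es ! i \<subseteq> K i) \<and>
           (\<forall>i. i + 1 < m \<longrightarrow> f (vs ! i) = T i)"
proof -
  have local: "\<forall>i\<in>{..<m}. \<exists>g. inj_on g (es ! i) \<and> g ` es ! i \<subseteq> K i \<and>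
           (\<forall>j. j + 1 < m \<and> vs ! j \<in> es ! i \<longrightarrow> g (vs ! j) = T j)"
    by (intro ballI edge_colouring_with_junctions) (use assms in auto)
  obtain g where g: "\<And>i. i < m \<Longrightarrow> inj_on (g i) (es ! i) \<and> g i ` es ! i \<subseteq> K i \<and>
           (\<forall>j. j + 1 < m \<and> vs ! j \<in> es ! i \<longrightarrow> g i (vs ! j) = T j)"
    using bchoice[OF local] lessThan_iff by fast
  have compatible: "g i x = g j x" if "i < m" "j < m" "x \<in> es ! i" "x \<in> es ! j" "i < j" for i j x
  proof -
    have "j = i + 1" "x = vs ! i" using edges_meet_consecutive[OF that(5,2,3,4)] by simp_all
    then show ?thesis using g[OF that(1)] g[OF that(2)] that(2-4) by simp
  qed
  have "g i x = g j x" if "i \<in> {..<m}" "j \<in> {..<m}" "x \<in> es ! i" "x \<in> es ! j" for i j x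
  proof (cases i j rule: linorder_cases)
    case less
    then show ?thesis using compatible that by simp
  next
    case greater
    then show ?thesis using compatible[of j i x] that by simp
  qed simp
  then obtain f where f: "\<forall>i\<in>{..<m}. \<forall>x\<in>es ! i. f x = g i x"
    by (rule glue_compatible_maps[of "{..<m}" "\<lambda>i. es ! i", THEN exE])
  have "inj_on f (es ! i) \<and> f ` es ! i \<subseteq> K i" if "i < m" for i
  proof -
    have "\<And>x. x \<in> es ! i \<Longrightarrow> f x = g i x" using f that by simp
    then show ?thesis using g[OF that] by (metis image_cong inj_on_cong)
  qed
  moreover have "f (vs ! i) = T i" if "i + 1 < m" for i
  proof -
    have "f (vs ! i) = g i (vs ! i)"
      using f[rule_format, of i "vs ! i"] junction_mem[OF that] that by simp
    then show ?thesis using g[of i] junction_mem[OF that] that by simp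
  qed
  ultimately show ?thesis by blast
qed

lemma palette_L21_colouring:
  assumes "0 < m" "0 < r"
    and "\<And>i. i < m \<Longrightarrow> finite (K i) \<and> r \<le> card (K i) \<and> two_apart (K i) \<and> K i \<subseteq> {..B}"
    and KK: "\<And>i. i + 1 < m \<Longrightarrow> K i \<inter> K (i + 1) = {T i}"
    and "\<And>i. i + 2 < m \<Longrightarrow> T i \<noteq> T (i + 1)"
  obtains f where "L21_colouring verts edges f" "span verts f \<le> B"
proof -
  obtain f where f: "\<And>i. i < m \<Longrightarrow> inj_on f (es ! i) \<and> f ` es ! i \<subseteq> K i"
    "\<And>i. i + 1 < m \<Longrightarrow> f (vs ! i) = T i"
    using palette_colouring[of K T] assms(3-5) by blast
  have "inj_on f (es ! i \<union> es ! (i + 1))" if "i + 1 < m" for i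
  proof (rule inj_on_Un_single_meet)
    show "f ` es ! i \<inter> f ` es ! (i + 1) \<subseteq> {f (vs ! i)}"
      using f[of i] f[of "i + 1"] KK[OF that] f(2)[OF that] that by auto
  qed (use f that consecutive_edges_meet in auto)
  moreover have "two_apart (f ` es ! i)" if "i < m" for i
    using f(1)[OF that] assms(3)[OF that] by (blast intro: two_apart_subset)
  ultimately have "L21_colouring verts edges f"
    unfolding L21_colouring_iff using f(1) by blast
  moreover have "span verts f \<le> B"
  proof (rule span_le[OF finite_verts verts_nonempty[OF assms(1,2)]])
    show "f ` verts \<subseteq> {..B}" using f(1) assms(3) by (fastforce simp: edges_conv_nth)
  qed
  ultimately show thesis by (rule that)
qed

lemma span_ge_edge:
  assumes "L21_colouring verts edges f" "0 < m" "0 < r"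
  shows "2 * r - 2 \<le> span verts f"
proof -
  define S where "S = f ` es ! 0"
  have "inj_on f (es ! 0)" "two_apart S"
    using assms(1,2) by (simp_all add: L21_colouring_iff S_def)
  then have "finite S" "card S = r" "S \<noteq> {}"
    using assms(2,3) finite_edge card_edge edge_nonempty by (auto simp: S_def card_image)
  moreover have "S \<subseteq> {Min S..Max S}" using \<open>finite S\<close> by auto
  ultimately have "2 * r \<le> Max S - Min S + 2"
    using two_apart_card[OF _ \<open>two_apart S\<close>] by auto
  also have "Max S - Min S = span (es ! 0) f" by (simp add: S_def span_def)
  also have "\<dots> \<le> span verts f"
    using assms(2,3) card_edge[of 0] edge_subset_verts[of 0] finite_verts
    by (intro span_mono) auto
  finally show ?thesis by simp
qed

lemma span_ge_two_edges:
  assumes "L21_colouring verts edges f" "2 \<le> m" "2 \<le> r"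
  shows "2 * r - 1 \<le> span verts f"
proof -
  have meet: "es ! 0 \<inter> es ! 1 = {vs ! 0}" using assms(2) consecutive_edges_meet[of 0] by simp
  then have card: "card (es ! 0 \<union> es ! 1) = 2 * r - 1"
    using assms(2) by (intro card_Un_single_meet) (auto simp: finite_edge card_edge)
  have "2 * r - 1 \<le> span (es ! 0 \<union> es ! 1) f"
    unfolding card[symmetric]
  proof (rule card_le_span_of_junction)
    show "inj_on f (es ! 0 \<union> es ! 1)" "two_apart (f ` es ! 0)" "two_apart (f ` es ! 1)"
      using assms(1,2) by (simp_all add: L21_colouring_iff)
  qed (use assms(2,3) meet card in \<open>auto simp: finite_edge\<close>)
  also have "\<dots> \<le> span verts f"
    using assms(2) edge_subset_verts[of 0] edge_subset_verts[of 1] finite_verts meet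
    by (intro span_mono) auto
  finally show ?thesis .
qed

lemma span_ge_three_edges:
  assumes "L21_colouring verts edges f" "3 \<le> m" "3 \<le> r"
  shows "2 * r \<le> span verts f"
proof -
  have "2 * r \<le> span (es ! 0 \<union> es ! 1 \<union> es ! 2) f"
  proof (rule three_edges_span_ge[OF assms(3)])
    show "es ! 0 \<inter> es ! 1 = {vs ! 0}" "es ! 1 \<inter> es ! 2 = {vs ! 1}" "es ! 0 \<inter> es ! 2 = {}"
      using assms(2) consecutive_edges_meet[of 0] consecutive_edges_meet[of 1]
        distant_edges_disjoint[of 0 2] by (simp_all add: numeral_2_eq_2)
    show "two_apart (f ` es ! 0)" "two_apart (f ` es ! 1)" "two_apart (f ` es ! 2)"
      "inj_on f (es ! 0 \<union> es ! 1)" "inj_on f (es ! 1 \<union> es ! 2)"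
      using assms(1,2) by (simp_all add: L21_colouring_iff numeral_2_eq_2)
  qed (use assms(2) in \<open>simp_all add: finite_edge card_edge\<close>)
  also have "\<dots> \<le> span verts f"
    using assms(2) edge_subset_verts[of 0] edge_subset_verts[of 1] edge_subset_verts[of 2]
      finite_verts edge_nonempty[of 0] assms(3) by (intro span_mono) auto
  finally show ?thesis .
qed

lemma lambda21_one_edge:
  assumes "m = 1" "0 < r"
  shows "lambda21 verts edges = 2 * r - 2"
proof -
  obtain f where "L21_colouring verts edges f" "span verts f \<le> 2 * r - 2"
  proof (rule palette_L21_colouring[of "\<lambda>_. (\<lambda>k. 2 * k) ` {..<r}" "2 * r - 2" "\<lambda>_. 0"])
    show "finite ((\<lambda>k. 2 * k) ` {..<r}) \<and> r \<le> card ((\<lambda>k. 2 * k) ` {..<r}) \<and>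
        two_apart ((\<lambda>k. 2 * k) ` {..<r}) \<and> (\<lambda>k. 2 * k) ` {..<r} \<subseteq> {..2 * r - 2}" for i
      by (auto simp: card_image inj_on_def two_apart_def)
  qed (use assms in auto)
  then show ?thesis using span_ge_edge assms by (intro lambda21_eqI) auto
qed

lemma lambda21_two_edges:
  assumes "m = 2" "2 \<le> r"
  shows "lambda21 verts edges = 2 * r - 1"
proof -
  define K :: "nat \<Rightarrow> nat set" where
    "K i = (if i = 0 then (\<lambda>k. 2 * k) ` {..<r} else insert 0 ((\<lambda>k. 2 * k + 3) ` {..<r - 1}))"
    for i
  have "0 \<notin> (\<lambda>k. 2 * k + 3) ` {..<r - 1}" by auto
  then have card: "card (K 0) = r" "card (K 1) = r"
    using card_arith_progression[of 3 "r - 1"] assms(2) by (simp_all add: K_def card_image inj_on_def)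
  have apart: "two_apart (K 0)" "two_apart (K 1)"
    by (auto simp: K_def two_apart_def)
  have meet: "K 0 \<inter> K 1 = {0}"
    using assms(2) by (auto simp: K_def) presburger
  have bound: "K i \<subseteq> {..2 * r - 1}" for i using assms(2) by (auto simp: K_def)
  obtain f where "L21_colouring verts edges f" "span verts f \<le> 2 * r - 1"
  proof (rule palette_L21_colouring[of K "2 * r - 1" "\<lambda>_. 0"])
    show "finite (K i) \<and> r \<le> card (K i) \<and> two_apart (K i) \<and> K i \<subseteq> {..2 * r - 1}"
      if "i < m" for i
      using that assms(1) card apart bound by (auto simp: less_2_cases_iff K_def)
    show "K i \<inter> K (i + 1) = {0}" if "i + 1 < m" for i
      using that assms(1) meet by simp
  qed (use assms that in simp_all)
  then show ?thesis using span_ge_two_edges assms by (intro lambda21_eqI) auto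
qed

lemma lambda21_three_edges:
  assumes "3 \<le> m" "3 \<le> r"
  shows "lambda21 verts edges = 2 * r"
proof -
  obtain f where "L21_colouring verts edges f" "span verts f \<le> 2 * r"
  proof (rule palette_L21_colouring[of "cyclic_palette r" "2 * r" cyclic_junction])
    show "finite (cyclic_palette r i) \<and> r \<le> card (cyclic_palette r i) \<and>
        two_apart (cyclic_palette r i) \<and> cyclic_palette r i \<subseteq> {..2 * r}" for i
      using assms(2) finite_cyclic_palette card_cyclic_palette two_apart_cyclic_palette
        cyclic_palette_le by simp
    show "cyclic_palette r i \<inter> cyclic_palette r (i + 1) = {cyclic_junction i}" for i
      using cyclic_palette_Int_Suc by simp
    show "cyclic_junction i \<noteq> cyclic_junction (i + 1)" for i
      using cyclic_junction_Suc by simp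
  qed (use assms that in simp_all)
  then show ?thesis using span_ge_three_edges assms by (intro lambda21_eqI) auto
qed

end

lemma hyperpath_list_of_hyperpath:
  assumes "hyperpath r m V E"
  obtains es vs where "hyperpath_list r m es vs" "V = \<Union> (set es)" "E = set es"
proof -
  obtain es vs where "length es = m" "set es = E" and meet: "\<forall>i j. i < j \<and> j < m \<longrightarrow>
      (if j = i + 1 then es ! i \<inter> es ! j = {vs ! i} else es ! i \<inter> es ! j = {})"
    and "uniform r E" "V = \<Union> E"
    using assms unfolding hyperpath_def by blast
  moreover have "hyperpath_list r m es vs"
  proof
    show "finite (es ! i)" "card (es ! i) = r" if "i < m" for i
      using \<open>uniform r E\<close> \<open>set es = E\<close> \<open>length es = m\<close> that by (auto simp: uniform_def)
    show "es ! i \<inter> es ! (i + 1) = {vs ! i}" if "i + 1 < m" for i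
      using meet that by auto
    show "es ! i \<inter> es ! j = {}" if "i + 1 < j" "j < m" for i j
      using meet that by auto
  qed fact
  ultimately show thesis using that by blast
qed

theorem theorem3p11:
  fixes V :: "'a set" and E :: "'a set set" and r m :: nat
  assumes "r \<ge> 3" and "m \<ge> 1" and "hyperpath r m V E"
  shows "(m = 1 \<longrightarrow> lambda21 V E = 2 * r - 2) \<and>
         (m = 2 \<longrightarrow> lambda21 V E = 2 * r - 1) \<and>
         (m \<ge> 3 \<longrightarrow> lambda21 V E = 2 * r)"
proof -
  obtain es vs where "hyperpath_list r m es vs" and V: "V = \<Union> (set es)" and E: "E = set es"
    using assms(3) by (rule hyperpath_list_of_hyperpath)
  then interpret hyperpath_list r m es vs by simp
  show ?thesis
    unfolding V E using assms(1) lambda21_one_edge lambda21_two_edges lambda21_three_edges by simp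
qed

end
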